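(* Let $(\Psi_d)_d$ be a constraint structure that is both a meet and a lift constraint structure, let $(\le,\wedge,P)$ be a decent triple on it, and let $(R^d)_d$ be a constraint-refining predicate that relates to a constraint-producing predicate $(\models^d)_d$. If $\vdash^{d}\Gamma\to\sigma'$ is derivable in DI, then for every $\sigma\in\Psi_d$ such that $P(\sigma\wedge\sigma')$, there exists $\sigma''\in\Psi_d$ such that $\sigma''\simeq\sigma\wedge\sigma'$ and $\sigma\to\vdash^{d}\Gamma\to\sigma''$ is derivable in SDI.
   Context: Formulas are first-order formulas in negation normal form, built from literals using $\wedge,\vee,\forall,\exists$. Eigenvariables (written $\bar x$) and meta-variables (written $X$) are two disjoint infinite supplies of variables. Domains: there is an initial domain $d_0$; for a domain $d$ and an eigenvariable $\bar x$ (resp. meta-variable $X$) not declared in $d$, $d;\bar x$ (resp. $d;X$) is a domain declaring additionally $\bar x$ (resp. $X$); all domains arise this way. A formula of domain $d$ is one whose free variables are eigenvariables or meta-variables declared in $d$; a context of domain $d$ is a finite multiset of formulas of domain $d$; $\Gamma_{lit}$ is the set of literals that are elements of $\Gamma$. A constraint structure consists of a set $\Psi_d$ for each domain $d$, with $\Psi_{d;\bar x}=\Psi_d$, and projection maps $\Psi_{d;X}\to\Psi_d$, $\sigma\mapsto\sigma_\downarrow$; a meet constraint structure additionally has a binary operation $\wedge$ on each $\Psi_d$; a lift constraint structure additionally has maps $\Psi_d\to\Psi_{d;X}$, $\sigma\mapsto\sigma^\uparrow$. A triple $(\le,\wedge,P)$, where $\le$ is a family of preorders on the $\Psi_d$,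 $\wedge$ the meet operations, and $P$ a family of predicates on the $\Psi_d$, is decent if, writing $\simeq$ for the equivalence relation generated by $\le$: (D1) for all $\sigma,\sigma'\in\Psi_d$, $\sigma\wedge\sigma'$ is a greatest lower bound of $\sigma,\sigma'$ for $\le$; (D2) for all $\sigma\in\Psi_d$ and $\sigma',\sigma''\in\Psi_{d;X}$, $\sigma''\simeq\sigma^\uparrow\wedge\sigma'$ implies $\sigma''_\downarrow\simeq\sigma\wedge\sigma'_\downarrow$; (P1) for all $\sigma\in\Psi_{d;X}$, $P(\sigma)\iff P(\sigma_\downarrow)$; (P2) for all $\sigma,\sigma'\in\Psi_d$, $P(\sigma)$ and $\sigma\le\sigma'$ imply $P(\sigma')$. A constraint-producing predicate is a family of relations $\mathcal A\models^d\sigma$ between sets $\mathcal A$ of literals of domain $d$ and $\sigma\in\Psi_d$. A constraint-refining predicate is a family of relations $R^d(\sigma,\mathcal A,\sigma')$ between sets $\mathcal A$ of literals of domain $d$ and pairs $\sigma,\sigma'\in\Psi_d$. It relates to $(\models^d)_d$ if for all $d$, all sets $\mathcal A$ of literals of domain $d$ and all $\sigma\in\Psi_d$: (A1) for all $\sigma'\in\Psi_d$, $R^d(\sigma,\mathcal A,\sigma')$ implies there is $\sigma''\in\Psi_d$ with $\sigma'\simeq\sigma\wedge\sigma''$, $P(\sigma\wedge\sigma'')$ and $\mathcal A\models^d\sigma''$; (A2) for all $\sigma'\in\Psi_d$, if $P(\sigma\wedge\sigma')$ and $\mathcal A\models^d\sigma'$ then there is $\sigma''\in\Psi_d$ with $\sigma''\simeq\sigma\wedge\sigma'$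 and $R^d(\sigma,\mathcal A,\sigma'')$. System DI derives $\vdash^d\Gamma\to\sigma$ ($\Gamma$, $\sigma$ of domain $d$) by: $\vdash^d\Gamma\to\sigma$ if $\Gamma_{lit}\models^d\sigma$; from $\vdash^d\Gamma,A\to\sigma$ and $\vdash^d\Gamma,B\to\sigma'$ infer $\vdash^d\Gamma,A\wedge B\to\sigma\wedge\sigma'$; from $\vdash^d\Gamma,A,B\to\sigma$ infer $\vdash^d\Gamma,A\vee B\to\sigma$; from $\vdash^{d;X}\Gamma,A[x:=X],\exists xA\to\sigma$ ($X$ fresh meta-variable) infer $\vdash^d\Gamma,\exists xA\to\sigma_\downarrow$; from $\vdash^{d;\bar x}\Gamma,A[x:=\bar x]\to\sigma$ ($\bar x$ fresh eigenvariable) infer $\vdash^d\Gamma,\forall xA\to\sigma$. System SDI derives $\sigma\to\vdash^d\Gamma\to\sigma'$ ($\Gamma,\sigma,\sigma'$ of domain $d$) by: $\sigma\to\vdash^d\Gamma\to\sigma'$ if $R^d(\sigma,\Gamma_{lit},\sigma')$; from $\sigma\to\vdash^d\Gamma,A,B\to\sigma'$ infer $\sigma\to\vdash^d\Gamma,A\vee B\to\sigma'$; for $i\in\{0,1\}$, from $\sigma\to\vdash^d\Gamma,A_i\to\sigma''$ and $\sigma''\to\vdash^d\Gamma,A_{1-i}\to\sigma'$ infer $\sigma\to\vdash^d\Gamma,A_0\wedge A_1\to\sigma'$; from $\sigma^\uparrow\to\vdash^{d;X}\Gamma,A[x:=X],\exists xA\to\sigma'$ ($X$ fresh meta-variable)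 infer $\sigma\to\vdash^d\Gamma,\exists xA\to\sigma'_\downarrow$; from $\sigma\to\vdash^{d;\bar x}\Gamma,A[x:=\bar x]\to\sigma'$ ($\bar x$ fresh eigenvariable) infer $\sigma\to\vdash^d\Gamma,\forall xA\to\sigma'$. *)

theory Defs
  imports Main "HOL-Library.Multiset"
begin

text \<open>Three disjoint supplies of variables: ordinary (bindable) variables,
  eigenvariables and meta-variables.\<close>
datatype 'f trm = Var nat | EVar nat | MVar nat | App 'f "'f trm list"

text \<open>Literals: an atom (polarity True) or a negated atom (polarity False).\<close>
datatype ('f, 'p) lit = Atom bool 'p "'f trm list"

datatype ('f, 'p) fm =
    L "('f, 'p) lit"
  | Conj "('f, 'p) fm" "('f, 'p) fm"
  | Disj "('f, 'p) fm" "('f, 'p) fm"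
  | Forall nat "('f, 'p) fm"
  | Exists nat "('f, 'p) fm"

fun subst_trm :: "nat \<Rightarrow> 'f trm \<Rightarrow> 'f trm \<Rightarrow> 'f trm" where
  "subst_trm x t (Var y) = (if y = x then t else Var y)"
| "subst_trm x t (EVar y) = EVar y"
| "subst_trm x t (MVar y) = MVar y"
| "subst_trm x t (App f ts) = App f (map (subst_trm x t) ts)"

fun subst_lit :: "nat \<Rightarrow> 'f trm \<Rightarrow> ('f, 'p) lit \<Rightarrow> ('f, 'p) lit" where
  "subst_lit x t (Atom b p ts) = Atom b p (map (subst_trm x t) ts)"

text \<open>\<open>subst_fm x t A\<close> is \<open>A[x:=t]\<close>. Only eigen-/meta-variables are substituted,
  which are never bound, so no capture can occur.\<close>
fun subst_fm :: "nat \<Rightarrow> 'f trm \<Rightarrow> ('f, 'p) fm \<Rightarrow> ('f, 'p) fm" where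
  "subst_fm x t (L l) = L (subst_lit x t l)"
| "subst_fm x t (Conj A B) = Conj (subst_fm x t A) (subst_fm x t B)"
| "subst_fm x t (Disj A B) = Disj (subst_fm x t A) (subst_fm x t B)"
| "subst_fm x t (Forall y A) = (if y = x then Forall y A else Forall y (subst_fm x t A))"
| "subst_fm x t (Exists y A) = (if y = x then Exists y A else Exists y (subst_fm x t A))"

fun vars_trm :: "'f trm \<Rightarrow> nat set" and evars_trm :: "'f trm \<Rightarrow> nat set"
  and mvars_trm :: "'f trm \<Rightarrow> nat set" where
  "vars_trm (Var y) = {y}" | "vars_trm (EVar y) = {}" | "vars_trm (MVar y) = {}"
| "vars_trm (App f ts) = (\<Union>t\<in>set ts. vars_trm t)"
| "evars_trm (Var y) = {}" | "evars_trm (EVar y) = {y}" | "evars_trm (MVar y) = {}"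
| "evars_trm (App f ts) = (\<Union>t\<in>set ts. evars_trm t)"
| "mvars_trm (Var y) = {}" | "mvars_trm (EVar y) = {}" | "mvars_trm (MVar y) = {y}"
| "mvars_trm (App f ts) = (\<Union>t\<in>set ts. mvars_trm t)"

fun lit_args :: "('f, 'p) lit \<Rightarrow> 'f trm list" where
  "lit_args (Atom b p ts) = ts"

fun fvars :: "('f, 'p) fm \<Rightarrow> nat set" where
  "fvars (L l) = (\<Union>t\<in>set (lit_args l). vars_trm t)"
| "fvars (Conj A B) = fvars A \<union> fvars B"
| "fvars (Disj A B) = fvars A \<union> fvars B"
| "fvars (Forall y A) = fvars A - {y}"
| "fvars (Exists y A) = fvars A - {y}"

fun fevars :: "('f, 'p) fm \<Rightarrow> nat set" where
  "fevars (L l) = (\<Union>t\<in>set (lit_args l). evars_trm t)"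
| "fevars (Conj A B) = fevars A \<union> fevars B"
| "fevars (Disj A B) = fevars A \<union> fevars B"
| "fevars (Forall y A) = fevars A"
| "fevars (Exists y A) = fevars A"

fun fmvars :: "('f, 'p) fm \<Rightarrow> nat set" where
  "fmvars (L l) = (\<Union>t\<in>set (lit_args l). mvars_trm t)"
| "fmvars (Conj A B) = fmvars A \<union> fmvars B"
| "fmvars (Disj A B) = fmvars A \<union> fmvars B"
| "fmvars (Forall y A) = fmvars A"
| "fmvars (Exists y A) = fmvars A"

text \<open>A domain is the list of its declarations (latest first); the initial domain
  \<open>d\<^sub>0\<close> is the empty list, \<open>d;x\<close> is \<open>DE x # d\<close> and \<open>d;X\<close> is \<open>DM X # d\<close>.\<close>
datatype decl = DE nat | DM nat

definition is_dom :: "decl list \<Rightarrow> bool" where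
  "is_dom d \<longleftrightarrow> distinct d"

definition fm_dom :: "decl list \<Rightarrow> ('f, 'p) fm \<Rightarrow> bool" where
  "fm_dom d A \<longleftrightarrow> fvars A = {} \<and> (\<forall>x\<in>fevars A. DE x \<in> set d) \<and> (\<forall>X\<in>fmvars A. DM X \<in> set d)"

definition ctx_dom :: "decl list \<Rightarrow> ('f, 'p) fm multiset \<Rightarrow> bool" where
  "ctx_dom d \<Gamma> \<longleftrightarrow> (\<forall>A\<in>#\<Gamma>. fm_dom d A)"

definition lits :: "('f, 'p) fm multiset \<Rightarrow> ('f, 'p) lit set" where
  "lits \<Gamma> = {l. L l \<in># \<Gamma>}"

text \<open>\<open>Psi d\<close> is \<open>\<Psi>\<^sub>d\<close>; \<open>proj d X\<close> is the projection \<open>\<Psi>\<^bsub>d;X\<^esub> \<rightarrow> \<Psi>\<^sub>d\<close>.\<close>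
definition constraint_structure ::
  "(decl list \<Rightarrow> 'c set) \<Rightarrow> (decl list \<Rightarrow> nat \<Rightarrow> 'c \<Rightarrow> 'c) \<Rightarrow> bool" where
  "constraint_structure Psi proj \<longleftrightarrow>
     (\<forall>d x. is_dom d \<and> DE x \<notin> set d \<longrightarrow> Psi (DE x # d) = Psi d) \<and>
     (\<forall>d X \<sigma>. is_dom d \<and> DM X \<notin> set d \<and> \<sigma> \<in> Psi (DM X # d) \<longrightarrow> proj d X \<sigma> \<in> Psi d)"

text \<open>A binary operation on each set \<open>\<Psi>\<^sub>d\<close>; since \<open>\<Psi>\<^bsub>d;x\<^esub> = \<Psi>\<^sub>d\<close> is the same set,
  the operation on it is the same one.\<close>
definition meet_structure ::
  "(decl list \<Rightarrow> 'c set) \<Rightarrow> (decl list \<Rightarrow> nat \<Rightarrow> 'c \<Rightarrow> 'c) \<Rightarrow> (decl list \<Rightarrow> 'c \<Rightarrow> 'c \<Rightarrow> 'c) \<Rightarrow> bool" where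
  "meet_structure Psi proj meet \<longleftrightarrow> constraint_structure Psi proj \<and>
     (\<forall>d \<sigma> \<sigma>'. is_dom d \<and> \<sigma> \<in> Psi d \<and> \<sigma>' \<in> Psi d \<longrightarrow> meet d \<sigma> \<sigma>' \<in> Psi d) \<and>
     (\<forall>d x. is_dom d \<and> DE x \<notin> set d \<longrightarrow> (\<forall>\<sigma>\<in>Psi d. \<forall>\<sigma>'\<in>Psi d. meet (DE x # d) \<sigma> \<sigma>' = meet d \<sigma> \<sigma>'))"

definition lift_structure ::
  "(decl list \<Rightarrow> 'c set) \<Rightarrow> (decl list \<Rightarrow> nat \<Rightarrow> 'c \<Rightarrow> 'c) \<Rightarrow> (decl list \<Rightarrow> nat \<Rightarrow> 'c \<Rightarrow> 'c) \<Rightarrow> bool" where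
  "lift_structure Psi proj lift \<longleftrightarrow> constraint_structure Psi proj \<and>
     (\<forall>d X \<sigma>. is_dom d \<and> DM X \<notin> set d \<and> \<sigma> \<in> Psi d \<longrightarrow> lift d X \<sigma> \<in> Psi (DM X # d))"

definition ceq :: "(decl list \<Rightarrow> 'c \<Rightarrow> 'c \<Rightarrow> bool) \<Rightarrow> decl list \<Rightarrow> 'c \<Rightarrow> 'c \<Rightarrow> bool" where
  "ceq le d \<sigma> \<sigma>' \<longleftrightarrow> le d \<sigma> \<sigma>' \<and> le d \<sigma>' \<sigma>"

definition decent ::
  "(decl list \<Rightarrow> 'c set) \<Rightarrow> (decl list \<Rightarrow> nat \<Rightarrow> 'c \<Rightarrow> 'c) \<Rightarrow> (decl list \<Rightarrow> 'c \<Rightarrow> 'c \<Rightarrow> 'c) \<Rightarrow>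
   (decl list \<Rightarrow> nat \<Rightarrow> 'c \<Rightarrow> 'c) \<Rightarrow> (decl list \<Rightarrow> 'c \<Rightarrow> 'c \<Rightarrow> bool) \<Rightarrow> (decl list \<Rightarrow> 'c \<Rightarrow> bool) \<Rightarrow> bool" where
  "decent Psi proj meet lift le P \<longleftrightarrow>
     \<comment> \<open>each \<open>le d\<close> is a preorder on \<open>\<Psi>\<^sub>d\<close>\<close>
     (\<forall>d. is_dom d \<longrightarrow> (\<forall>\<sigma>\<in>Psi d. le d \<sigma> \<sigma>) \<and>
        (\<forall>\<sigma>\<in>Psi d. \<forall>\<sigma>'\<in>Psi d. \<forall>\<sigma>''\<in>Psi d. le d \<sigma> \<sigma>' \<and> le d \<sigma>' \<sigma>'' \<longrightarrow> le d \<sigma> \<sigma>'')) \<and>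
     \<comment> \<open>\<open>\<Psi>\<^bsub>d;x\<^esub> = \<Psi>\<^sub>d\<close> carries the same preorder and predicate\<close>
     (\<forall>d x. is_dom d \<and> DE x \<notin> set d \<longrightarrow>
        (\<forall>\<sigma>\<in>Psi d. \<forall>\<sigma>'\<in>Psi d. le (DE x # d) \<sigma> \<sigma>' = le d \<sigma> \<sigma>') \<and>
        (\<forall>\<sigma>\<in>Psi d. P (DE x # d) \<sigma> = P d \<sigma>)) \<and>
     \<comment> \<open>(D1)\<close>
     (\<forall>d. is_dom d \<longrightarrow> (\<forall>\<sigma>\<in>Psi d. \<forall>\<sigma>'\<in>Psi d.
        le d (meet d \<sigma> \<sigma>') \<sigma> \<and> le d (meet d \<sigma> \<sigma>') \<sigma>' \<and>
        (\<forall>\<tau>\<in>Psi d. le d \<tau> \<sigma> \<and> le d \<tau> \<sigma>' \<longrightarrow> le d \<tau> (meet d \<sigma> \<sigma>')))) \<and>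
     \<comment> \<open>(D2)\<close>
     (\<forall>d X. is_dom d \<and> DM X \<notin> set d \<longrightarrow> (\<forall>\<sigma>\<in>Psi d. \<forall>\<sigma>'\<in>Psi (DM X # d). \<forall>\<sigma>''\<in>Psi (DM X # d).
        ceq le (DM X # d) \<sigma>'' (meet (DM X # d) (lift d X \<sigma>) \<sigma>') \<longrightarrow>
        ceq le d (proj d X \<sigma>'') (meet d \<sigma> (proj d X \<sigma>')))) \<and>
     \<comment> \<open>(P1)\<close>
     (\<forall>d X. is_dom d \<and> DM X \<notin> set d \<longrightarrow> (\<forall>\<sigma>\<in>Psi (DM X # d). P (DM X # d) \<sigma> \<longleftrightarrow> P d (proj d X \<sigma>))) \<and>
     \<comment> \<open>(P2)\<close>
     (\<forall>d. is_dom d \<longrightarrow> (\<forall>\<sigma>\<in>Psi d. \<forall>\<sigma>'\<in>Psi d. P d \<sigma> \<and> le d \<sigma> \<sigma>' \<longrightarrow> P d \<sigma>'))"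

definition lits_dom :: "decl list \<Rightarrow> ('f, 'p) lit set \<Rightarrow> bool" where
  "lits_dom d \<A> \<longleftrightarrow> (\<forall>l\<in>\<A>. fm_dom d (L l))"

text \<open>\<open>R d \<sigma> \<A> \<sigma>'\<close> is \<open>R\<^sup>d(\<sigma>,\<A>,\<sigma>')\<close>; \<open>models d \<A> \<sigma>\<close> is \<open>\<A> \<Turnstile>\<^sup>d \<sigma>\<close>.\<close>
definition relates ::
  "(decl list \<Rightarrow> 'c set) \<Rightarrow> (decl list \<Rightarrow> 'c \<Rightarrow> 'c \<Rightarrow> 'c) \<Rightarrow> (decl list \<Rightarrow> 'c \<Rightarrow> 'c \<Rightarrow> bool) \<Rightarrow>
   (decl list \<Rightarrow> 'c \<Rightarrow> bool) \<Rightarrow> (decl list \<Rightarrow> 'c \<Rightarrow> ('f, 'p) lit set \<Rightarrow> 'c \<Rightarrow> bool) \<Rightarrow>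
   (decl list \<Rightarrow> ('f, 'p) lit set \<Rightarrow> 'c \<Rightarrow> bool) \<Rightarrow> bool" where
  "relates Psi meet le P R models \<longleftrightarrow>
     (\<forall>d \<A> \<sigma>. is_dom d \<and> lits_dom d \<A> \<and> \<sigma> \<in> Psi d \<longrightarrow>
        \<comment> \<open>(A1)\<close>
        (\<forall>\<sigma>'\<in>Psi d. R d \<sigma> \<A> \<sigma>' \<longrightarrow>
           (\<exists>\<sigma>''\<in>Psi d. ceq le d \<sigma>' (meet d \<sigma> \<sigma>'') \<and> P d (meet d \<sigma> \<sigma>'') \<and> models d \<A> \<sigma>'')) \<and>
        \<comment> \<open>(A2)\<close>
        (\<forall>\<sigma>'\<in>Psi d. P d (meet d \<sigma> \<sigma>') \<and> models d \<A> \<sigma>' \<longrightarrow>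
           (\<exists>\<sigma>''\<in>Psi d. ceq le d \<sigma>'' (meet d \<sigma> \<sigma>') \<and> R d \<sigma> \<A> \<sigma>'')))"

text \<open>\<open>DI \<dots> d \<Gamma> \<sigma>\<close> is \<open>\<turnstile>\<^sup>d \<Gamma> \<rightarrow> \<sigma>\<close>.\<close>
inductive DI for Psi :: "decl list \<Rightarrow> 'c set" and proj :: "decl list \<Rightarrow> nat \<Rightarrow> 'c \<Rightarrow> 'c"
  and meet :: "decl list \<Rightarrow> 'c \<Rightarrow> 'c \<Rightarrow> 'c"
  and models :: "decl list \<Rightarrow> ('f, 'p) lit set \<Rightarrow> 'c \<Rightarrow> bool" where
  DI_ax: "\<lbrakk>is_dom d; ctx_dom d \<Gamma>; \<sigma> \<in> Psi d; models d (lits \<Gamma>) \<sigma>\<rbrakk>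
    \<Longrightarrow> DI Psi proj meet models d \<Gamma> \<sigma>"
| DI_conj: "\<lbrakk>DI Psi proj meet models d (\<Gamma> + {#A#}) \<sigma>; DI Psi proj meet models d (\<Gamma> + {#B#}) \<sigma>'\<rbrakk>
    \<Longrightarrow> DI Psi proj meet models d (\<Gamma> + {#Conj A B#}) (meet d \<sigma> \<sigma>')"
| DI_disj: "DI Psi proj meet models d (\<Gamma> + {#A, B#}) \<sigma>
    \<Longrightarrow> DI Psi proj meet models d (\<Gamma> + {#Disj A B#}) \<sigma>"
| DI_ex: "\<lbrakk>is_dom d; DM X \<notin> set d; ctx_dom d (\<Gamma> + {#Exists x A#});
    DI Psi proj meet models (DM X # d) (\<Gamma> + {#subst_fm x (MVar X) A, Exists x A#}) \<sigma>\<rbrakk>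
    \<Longrightarrow> DI Psi proj meet models d (\<Gamma> + {#Exists x A#}) (proj d X \<sigma>)"
| DI_all: "\<lbrakk>is_dom d; DE y \<notin> set d; ctx_dom d (\<Gamma> + {#Forall x A#});
    DI Psi proj meet models (DE y # d) (\<Gamma> + {#subst_fm x (EVar y) A#}) \<sigma>\<rbrakk>
    \<Longrightarrow> DI Psi proj meet models d (\<Gamma> + {#Forall x A#}) \<sigma>"

text \<open>\<open>SDI \<dots> d \<sigma> \<Gamma> \<sigma>'\<close> is \<open>\<sigma> \<rightarrow> \<turnstile>\<^sup>d \<Gamma> \<rightarrow> \<sigma>'\<close>.\<close>
inductive SDI for Psi :: "decl list \<Rightarrow> 'c set" and proj :: "decl list \<Rightarrow> nat \<Rightarrow> 'c \<Rightarrow> 'c"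
  and lift :: "decl list \<Rightarrow> nat \<Rightarrow> 'c \<Rightarrow> 'c"
  and R :: "decl list \<Rightarrow> 'c \<Rightarrow> ('f, 'p) lit set \<Rightarrow> 'c \<Rightarrow> bool" where
  SDI_ax: "\<lbrakk>is_dom d; ctx_dom d \<Gamma>; \<sigma> \<in> Psi d; \<sigma>' \<in> Psi d; R d \<sigma> (lits \<Gamma>) \<sigma>'\<rbrakk>
    \<Longrightarrow> SDI Psi proj lift R d \<sigma> \<Gamma> \<sigma>'"
| SDI_disj: "SDI Psi proj lift R d \<sigma> (\<Gamma> + {#A, B#}) \<sigma>'
    \<Longrightarrow> SDI Psi proj lift R d \<sigma> (\<Gamma> + {#Disj A B#}) \<sigma>'"
| SDI_conj0: "\<lbrakk>SDI Psi proj lift R d \<sigma> (\<Gamma> + {#A0#}) \<sigma>''; SDI Psi proj lift R d \<sigma>'' (\<Gamma> + {#A1#}) \<sigma>'\<rbrakk>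
    \<Longrightarrow> SDI Psi proj lift R d \<sigma> (\<Gamma> + {#Conj A0 A1#}) \<sigma>'"
| SDI_conj1: "\<lbrakk>SDI Psi proj lift R d \<sigma> (\<Gamma> + {#A1#}) \<sigma>''; SDI Psi proj lift R d \<sigma>'' (\<Gamma> + {#A0#}) \<sigma>'\<rbrakk>
    \<Longrightarrow> SDI Psi proj lift R d \<sigma> (\<Gamma> + {#Conj A0 A1#}) \<sigma>'"
| SDI_ex: "\<lbrakk>is_dom d; DM X \<notin> set d; ctx_dom d (\<Gamma> + {#Exists x A#}); \<sigma> \<in> Psi d;
    SDI Psi proj lift R (DM X # d) (lift d X \<sigma>) (\<Gamma> + {#subst_fm x (MVar X) A, Exists x A#}) \<sigma>'\<rbrakk>
    \<Longrightarrow> SDI Psi proj lift R d \<sigma> (\<Gamma> + {#Exists x A#}) (proj d X \<sigma>')"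
| SDI_all: "\<lbrakk>is_dom d; DE y \<notin> set d; ctx_dom d (\<Gamma> + {#Forall x A#});
    SDI Psi proj lift R (DE y # d) \<sigma> (\<Gamma> + {#subst_fm x (EVar y) A#}) \<sigma>'\<rbrakk>
    \<Longrightarrow> SDI Psi proj lift R d \<sigma> (\<Gamma> + {#Forall x A#}) \<sigma>'"

end

theory Submission
  imports Defs
begin

text \<open>Induction on the DI derivation, carrying the incoming constraint \<open>\<sigma>\<close> along. An axiom
  is turned into a refinement step by (A2). For a conjunction the two premises are chained:
  \<open>\<sigma> \<wedge> \<sigma>\<^sub>1\<close> is refined first and its result, which is equivalent to \<open>\<sigma> \<wedge> \<sigma>\<^sub>1\<close>, is fed into
  the second premise; associativity of meets up to \<open>\<simeq>\<close> then gives \<open>\<sigma> \<wedge> (\<sigma>\<^sub>1 \<wedge> \<sigma>\<^sub>2)\<close>.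
  For an existential the constraint is lifted, and (D2) together with (P1) lets both the
  hypothesis \<open>P\<close> and the final equivalence pass through the projection.\<close>

locale glb_preorder =
  fixes S :: "'a set" and le :: "'a \<Rightarrow> 'a \<Rightarrow> bool" and meet :: "'a \<Rightarrow> 'a \<Rightarrow> 'a"
  assumes refl: "x \<in> S \<Longrightarrow> le x x"
    and trans: "\<lbrakk>x \<in> S; y \<in> S; z \<in> S; le x y; le y z\<rbrakk> \<Longrightarrow> le x z"
    and meet_closed: "\<lbrakk>x \<in> S; y \<in> S\<rbrakk> \<Longrightarrow> meet x y \<in> S"
    and meet_le1: "\<lbrakk>x \<in> S; y \<in> S\<rbrakk> \<Longrightarrow> le (meet x y) x"
    and meet_le2: "\<lbrakk>x \<in> S; y \<in> S\<rbrakk> \<Longrightarrow> le (meet x y) y"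
    and meet_greatest: "\<lbrakk>x \<in> S; y \<in> S; z \<in> S; le z x; le z y\<rbrakk> \<Longrightarrow> le z (meet x y)"
begin

abbreviation equiv :: "'a \<Rightarrow> 'a \<Rightarrow> bool" (infix "\<approx>" 50) where
  "x \<approx> y \<equiv> le x y \<and> le y x"

lemma equiv_trans: "\<lbrakk>x \<in> S; y \<in> S; z \<in> S; x \<approx> y; y \<approx> z\<rbrakk> \<Longrightarrow> x \<approx> z"
  using trans by blast

lemma meet_mono:
  assumes "x \<in> S" "x' \<in> S" "y \<in> S" "y' \<in> S" "le x x'" "le y y'"
  shows "le (meet x y) (meet x' y')"
  using assms by (meson meet_closed meet_greatest meet_le1 meet_le2 trans)

lemma meet_cong_left: "\<lbrakk>x \<in> S; x' \<in> S; y \<in> S; x \<approx> x'\<rbrakk> \<Longrightarrow> meet x y \<approx> meet x' y"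
  using meet_mono refl by blast

lemma meet_assoc:
  assumes "x \<in> S" "y \<in> S" "z \<in> S"
  shows "meet (meet x y) z \<approx> meet x (meet y z)"
  using assms by (smt (verit) meet_closed meet_greatest meet_le1 meet_le2 trans)

lemma meet_assoc_cong:
  assumes "t \<in> S" "x \<in> S" "y \<in> S" "z \<in> S" "t \<approx> meet x y"
  shows "meet t z \<approx> meet x (meet y z)"
proof -
  have "meet t z \<approx> meet (meet x y) z"
    using meet_cong_left assms meet_closed by simp
  moreover have "meet (meet x y) z \<approx> meet x (meet y z)"
    using meet_assoc assms by simp
  ultimately show ?thesis
    by (meson equiv_trans assms meet_closed)
qed

end

locale constraint_setting =
  fixes Psi :: "decl list \<Rightarrow> 'c set"
    and proj lift :: "decl list \<Rightarrow> nat \<Rightarrow> 'c \<Rightarrow> 'c"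
    and meet :: "decl list \<Rightarrow> 'c \<Rightarrow> 'c \<Rightarrow> 'c"
    and le :: "decl list \<Rightarrow> 'c \<Rightarrow> 'c \<Rightarrow> bool"
    and P :: "decl list \<Rightarrow> 'c \<Rightarrow> bool"
    and R :: "decl list \<Rightarrow> 'c \<Rightarrow> ('f, 'p) lit set \<Rightarrow> 'c \<Rightarrow> bool"
    and models :: "decl list \<Rightarrow> ('f, 'p) lit set \<Rightarrow> 'c \<Rightarrow> bool"
  assumes meet_structure: "meet_structure Psi proj meet"
    and lift_structure: "lift_structure Psi proj lift"
    and decent: "decent Psi proj meet lift le P"
    and relates: "relates Psi meet le P R models"
begin

lemma meet_closed: "\<lbrakk>is_dom d; \<sigma> \<in> Psi d; \<sigma>' \<in> Psi d\<rbrakk> \<Longrightarrow> meet d \<sigma> \<sigma>' \<in> Psi d"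
  using meet_structure unfolding meet_structure_def by blast

lemma proj_closed: "\<lbrakk>is_dom d; DM X \<notin> set d; \<sigma> \<in> Psi (DM X # d)\<rbrakk> \<Longrightarrow> proj d X \<sigma> \<in> Psi d"
  using meet_structure unfolding meet_structure_def constraint_structure_def by blast

lemma lift_closed: "\<lbrakk>is_dom d; DM X \<notin> set d; \<sigma> \<in> Psi d\<rbrakk> \<Longrightarrow> lift d X \<sigma> \<in> Psi (DM X # d)"
  using lift_structure unfolding lift_structure_def by blast

lemma Psi_DE: "\<lbrakk>is_dom d; DE x \<notin> set d\<rbrakk> \<Longrightarrow> Psi (DE x # d) = Psi d"
  using meet_structure unfolding meet_structure_def constraint_structure_def by blast

lemma meet_DE: "\<lbrakk>is_dom d; DE x \<notin> set d; \<sigma> \<in> Psi d; \<sigma>' \<in> Psi d\<rbrakk> \<Longrightarrow> meet (DE x # d) \<sigma> \<sigma>' = meet d \<sigma> \<sigma>'"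
  using meet_structure unfolding meet_structure_def by blast

lemma le_DE: "\<lbrakk>is_dom d; DE x \<notin> set d; \<sigma> \<in> Psi d; \<sigma>' \<in> Psi d\<rbrakk> \<Longrightarrow> le (DE x # d) \<sigma> \<sigma>' = le d \<sigma> \<sigma>'"
  using decent unfolding decent_def by blast

lemma P_DE: "\<lbrakk>is_dom d; DE x \<notin> set d; \<sigma> \<in> Psi d\<rbrakk> \<Longrightarrow> P (DE x # d) \<sigma> = P d \<sigma>"
  using decent unfolding decent_def by blast

lemma proj_meet_lift:
  "\<lbrakk>is_dom d; DM X \<notin> set d; \<sigma> \<in> Psi d; \<sigma>' \<in> Psi (DM X # d); \<sigma>'' \<in> Psi (DM X # d);
    ceq le (DM X # d) \<sigma>'' (meet (DM X # d) (lift d X \<sigma>) \<sigma>')\<rbrakk>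
   \<Longrightarrow> ceq le d (proj d X \<sigma>'') (meet d \<sigma> (proj d X \<sigma>'))"
  using decent unfolding decent_def by blast

lemma P_proj: "\<lbrakk>is_dom d; DM X \<notin> set d; \<sigma> \<in> Psi (DM X # d)\<rbrakk> \<Longrightarrow> P (DM X # d) \<sigma> \<longleftrightarrow> P d (proj d X \<sigma>)"
  using decent unfolding decent_def by blast

lemma P_mono: "\<lbrakk>is_dom d; \<sigma> \<in> Psi d; \<sigma>' \<in> Psi d; P d \<sigma>; le d \<sigma> \<sigma>'\<rbrakk> \<Longrightarrow> P d \<sigma>'"
  using decent unfolding decent_def by blast

lemma glb_preorder_Psi: "is_dom d \<Longrightarrow> glb_preorder (Psi d) (le d) (meet d)"
proof unfold_locales
  assume d: "is_dom d"
  note dec = decent[unfolded decent_def]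
  show "\<And>x. x \<in> Psi d \<Longrightarrow> le d x x"
    and "\<And>x y z. \<lbrakk>x \<in> Psi d; y \<in> Psi d; z \<in> Psi d; le d x y; le d y z\<rbrakk> \<Longrightarrow> le d x z"
    using d dec[THEN conjunct1] by blast+
  show "\<And>x y. \<lbrakk>x \<in> Psi d; y \<in> Psi d\<rbrakk> \<Longrightarrow> meet d x y \<in> Psi d"
    using d meet_closed by blast
  show "\<And>x y. \<lbrakk>x \<in> Psi d; y \<in> Psi d\<rbrakk> \<Longrightarrow> le d (meet d x y) x"
    and "\<And>x y. \<lbrakk>x \<in> Psi d; y \<in> Psi d\<rbrakk> \<Longrightarrow> le d (meet d x y) y"
    and "\<And>x y z. \<lbrakk>x \<in> Psi d; y \<in> Psi d; z \<in> Psi d; le d z x; le d z y\<rbrakk> \<Longrightarrow> le d z (meet d x y)"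
    using d dec[THEN conjunct2, THEN conjunct2, THEN conjunct1] by blast+
qed

lemma R_complete:
  "\<lbrakk>is_dom d; lits_dom d \<A>; \<sigma> \<in> Psi d; \<sigma>' \<in> Psi d; P d (meet d \<sigma> \<sigma>'); models d \<A> \<sigma>'\<rbrakk>
   \<Longrightarrow> \<exists>\<sigma>''\<in>Psi d. ceq le d \<sigma>'' (meet d \<sigma> \<sigma>') \<and> R d \<sigma> \<A> \<sigma>''"
  using relates unfolding relates_def by blast

lemma DI_Psi: "DI Psi proj meet models d \<Gamma> \<sigma> \<Longrightarrow> is_dom d \<and> \<sigma> \<in> Psi d"
  by (induction rule: DI.induct) (auto simp: meet_closed proj_closed Psi_DE)

lemma lits_dom_lits: "ctx_dom d \<Gamma> \<Longrightarrow> lits_dom d (lits \<Gamma>)"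
  by (auto simp: ctx_dom_def lits_dom_def lits_def)

theorem DI_imp_SDI:
  assumes "DI Psi proj meet models d \<Gamma> \<sigma>'" and "\<sigma> \<in> Psi d" and "P d (meet d \<sigma> \<sigma>')"
  shows "\<exists>\<sigma>''\<in>Psi d. ceq le d \<sigma>'' (meet d \<sigma> \<sigma>') \<and> SDI Psi proj lift R d \<sigma> \<Gamma> \<sigma>''"
  using assms
proof (induction arbitrary: \<sigma> rule: DI.induct)
  case (DI_ax d \<Gamma> \<sigma>' \<sigma>)
  then show ?case
    by (metis R_complete SDI.SDI_ax lits_dom_lits)
next
  case (DI_conj d \<Gamma> A \<sigma>\<^sub>1 B \<sigma>\<^sub>2 \<sigma>)
  have d: "is_dom d" and \<sigma>\<^sub>1: "\<sigma>\<^sub>1 \<in> Psi d" and \<sigma>\<^sub>2: "\<sigma>\<^sub>2 \<in> Psi d"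
    using DI_conj.hyps DI_Psi by blast+
  interpret M: glb_preorder "Psi d" "le d" "meet d"
    using glb_preorder_Psi d .
  note \<sigma> = \<open>\<sigma> \<in> Psi d\<close>
  let ?\<rho> = "meet d \<sigma> (meet d \<sigma>\<^sub>1 \<sigma>\<^sub>2)"
  have \<rho>: "?\<rho> \<in> Psi d" and \<sigma>\<sigma>\<^sub>1: "meet d \<sigma> \<sigma>\<^sub>1 \<in> Psi d"
    using \<sigma> \<sigma>\<^sub>1 \<sigma>\<^sub>2 by (simp_all add: M.meet_closed)
  have "le d ?\<rho> (meet d \<sigma> \<sigma>\<^sub>1)"
    using \<sigma> \<sigma>\<^sub>1 \<sigma>\<^sub>2 by (simp add: M.meet_mono M.refl M.meet_le1 M.meet_closed)
  then have "P d (meet d \<sigma> \<sigma>\<^sub>1)"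
    by (rule P_mono[OF d \<rho> \<sigma>\<sigma>\<^sub>1 DI_conj.prems(2)])
  then obtain \<tau>\<^sub>1 where \<tau>\<^sub>1: "\<tau>\<^sub>1 \<in> Psi d" "ceq le d \<tau>\<^sub>1 (meet d \<sigma> \<sigma>\<^sub>1)"
      and SDI\<^sub>1: "SDI Psi proj lift R d \<sigma> (\<Gamma> + {#A#}) \<tau>\<^sub>1"
    using DI_conj.IH(1)[OF \<sigma>] by blast
  have \<tau>\<^sub>1\<sigma>\<^sub>2: "meet d \<tau>\<^sub>1 \<sigma>\<^sub>2 \<in> Psi d"
    using M.meet_closed[OF \<tau>\<^sub>1(1) \<sigma>\<^sub>2] .
  have assoc: "ceq le d (meet d \<tau>\<^sub>1 \<sigma>\<^sub>2) ?\<rho>"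
    using M.meet_assoc_cong[OF \<tau>\<^sub>1(1) \<sigma> \<sigma>\<^sub>1 \<sigma>\<^sub>2] \<tau>\<^sub>1(2) unfolding ceq_def by blast
  then have "P d (meet d \<tau>\<^sub>1 \<sigma>\<^sub>2)"
    using P_mono[OF d \<rho> \<tau>\<^sub>1\<sigma>\<^sub>2 DI_conj.prems(2)] unfolding ceq_def by blast
  then obtain \<tau>\<^sub>2 where \<tau>\<^sub>2: "\<tau>\<^sub>2 \<in> Psi d" "ceq le d \<tau>\<^sub>2 (meet d \<tau>\<^sub>1 \<sigma>\<^sub>2)"
      and SDI\<^sub>2: "SDI Psi proj lift R d \<tau>\<^sub>1 (\<Gamma> + {#B#}) \<tau>\<^sub>2"
    using DI_conj.IH(2)[OF \<tau>\<^sub>1(1)] by blast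
  have "ceq le d \<tau>\<^sub>2 ?\<rho>"
    using M.equiv_trans[OF \<tau>\<^sub>2(1) \<tau>\<^sub>1\<sigma>\<^sub>2 \<rho>] \<tau>\<^sub>2(2) assoc unfolding ceq_def by blast
  then show ?case
    using \<tau>\<^sub>2(1) SDI.SDI_conj0[OF SDI\<^sub>1 SDI\<^sub>2] by blast
next
  case (DI_disj d \<Gamma> A B \<sigma>' \<sigma>)
  then show ?case
    by (blast intro: SDI.SDI_disj)
next
  case (DI_ex d X \<Gamma> x A \<sigma>' \<sigma>)
  let ?dX = "DM X # d"
  have dX: "is_dom ?dX" and \<sigma>': "\<sigma>' \<in> Psi ?dX"
    using DI_ex.hyps(4) DI_Psi by blast+
  have lift: "lift d X \<sigma> \<in> Psi ?dX"
    using lift_closed DI_ex by blast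
  let ?\<mu> = "meet ?dX (lift d X \<sigma>) \<sigma>'"
  have \<mu>: "?\<mu> \<in> Psi ?dX"
    using meet_closed dX lift \<sigma>' by blast
  have "ceq le d (proj d X ?\<mu>) (meet d \<sigma> (proj d X \<sigma>'))"
    using proj_meet_lift[OF DI_ex.hyps(1,2) DI_ex.prems(1) \<sigma>' \<mu>]
      glb_preorder.refl[OF glb_preorder_Psi[OF dX] \<mu>]
    unfolding ceq_def by blast
  then have "P ?dX ?\<mu>"
    using P_proj P_mono DI_ex proj_closed meet_closed \<sigma>' \<mu> unfolding ceq_def by meson
  then obtain \<tau> where "\<tau> \<in> Psi ?dX" "ceq le ?dX \<tau> ?\<mu>"
      and "SDI Psi proj lift R ?dX (lift d X \<sigma>) (\<Gamma> + {#subst_fm x (MVar X) A, Exists x A#}) \<tau>"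
    using DI_ex.IH lift by blast
  then show ?case
    using proj_meet_lift proj_closed SDI.SDI_ex DI_ex \<sigma>' by metis
next
  case (DI_all d y \<Gamma> x A \<sigma>' \<sigma>)
  have Psi_eq: "Psi (DE y # d) = Psi d"
    using Psi_DE DI_all.hyps by blast
  then have \<sigma>': "\<sigma>' \<in> Psi d"
    using DI_all.hyps(4) DI_Psi by blast
  have meet_eq: "meet (DE y # d) \<sigma> \<sigma>' = meet d \<sigma> \<sigma>'"
    using meet_DE DI_all \<sigma>' by blast
  have "P (DE y # d) (meet (DE y # d) \<sigma> \<sigma>')"
    using P_DE meet_closed DI_all \<sigma>' meet_eq by simp
  then obtain \<tau> where "\<tau> \<in> Psi d" "ceq le (DE y # d) \<tau> (meet d \<sigma> \<sigma>')"
      and "SDI Psi proj lift R (DE y # d) \<sigma> (\<Gamma> + {#subst_fm x (EVar y) A#}) \<tau>"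
    using DI_all.IH[of \<sigma>] DI_all.prems(1) Psi_eq meet_eq by auto
  then show ?case
    using le_DE meet_closed SDI.SDI_all DI_all \<sigma>' unfolding ceq_def by metis
qed

end

theorem mainTheorem6:
  fixes Psi :: "decl list \<Rightarrow> 'c set"
    and proj lift :: "decl list \<Rightarrow> nat \<Rightarrow> 'c \<Rightarrow> 'c"
    and meet :: "decl list \<Rightarrow> 'c \<Rightarrow> 'c \<Rightarrow> 'c"
    and le :: "decl list \<Rightarrow> 'c \<Rightarrow> 'c \<Rightarrow> bool"
    and P :: "decl list \<Rightarrow> 'c \<Rightarrow> bool"
    and R :: "decl list \<Rightarrow> 'c \<Rightarrow> ('f, 'p) lit set \<Rightarrow> 'c \<Rightarrow> bool"
    and models :: "decl list \<Rightarrow> ('f, 'p) lit set \<Rightarrow> 'c \<Rightarrow> bool"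
  assumes "meet_structure Psi proj meet"
    and "lift_structure Psi proj lift"
    and "decent Psi proj meet lift le P"
    and "relates Psi meet le P R models"
    and "DI Psi proj meet models d \<Gamma> \<sigma>'"
    and "\<sigma> \<in> Psi d"
    and "P d (meet d \<sigma> \<sigma>')"
  shows "\<exists>\<sigma>''\<in>Psi d. ceq le d \<sigma>'' (meet d \<sigma> \<sigma>') \<and> SDI Psi proj lift R d \<sigma> \<Gamma> \<sigma>''"
proof -
  interpret constraint_setting Psi proj lift meet le P R models
    using assms(1-4) by unfold_locales
  show ?thesis
    using DI_imp_SDI assms(5-7) .
qed

end
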